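(* Let $N\ge2$, $s\in(0,1)$, $\beta\in(2s,1]$, and let $\mathcal K_s$ be a kernel as described in the context, with associated constant $C_{N,s}$. Let $E\subset\mathbb{R}^N$ be an open set with $\partial E$ of class $C^{1,\beta}$, $0\in\partial E$, and suppose there is $r_0>0$ such that for every $r\in(0,r_0]$, $$E\cap Q_r=\{(y',y_N)\in B^{N-1}_r\times(-r,r):\ y_N>\gamma(y')\},$$ where $Q_r=B^{N-1}_r\times(-r,r)$, $B^{N-1}_r$ is the ball of radius $r$ centred at $0$ in $\mathbb{R}^{N-1}$, and $\gamma\in C^{1,\beta}(B^{N-1}_{r_0})$ satisfies $|\gamma(y')|\le C_\gamma|y'|^{1+\beta}$. With $\tau_E=\mathbb 1_E-\mathbb 1_{\mathbb{R}^N\setminus\overline E}$, set for $r\in(0,r_0]$ and $t>0$ $$J_r(t)=\int_{Q_r}\mathcal K_s(y,t)\tau_E(y)\,dy,\qquad I_r(t)=\int_{\mathbb{R}^N\setminus Q_r}\left(t^{-1}\mathcal K_s(y,t)-\frac{C_{N,s}}{|y|^{N+2s}}\right)\tau_E(y)\,dy.$$ Then there is a constant $C>0$ depending only on $N,\beta,s$ and $E$ such that $|J_r(t)|\le C\,t\,r^{\beta-2s}$ for all $t>0$ and $r\in(0,r_0]$, and $\lim_{t\to0}I_r(t)=0$ for every $r\in(0,r_0]$.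
   Context: Kernel: $\mathcal K_s(x,t)=t^{-\frac{N}{2s}}P_s(t^{-\frac1{2s}}x)$ for $x\in\mathbb{R}^N$, $t>0$, where $P_s\in C^1(\mathbb{R}^N)$ is radially symmetric, and there are constants $\mathcal C_{N,s}>0$, $C_{N,s}>0$ with $$\frac{\mathcal C_{N,s}^{-1}}{1+|y|^{N+2s}}\le P_s(y)\le\frac{\mathcal C_{N,s}}{1+|y|^{N+2s}},\qquad |\nabla P_s(y)|\le\frac{\mathcal C_{N,s}}{1+|y|^{N+2s+1}}\quad(y\in\mathbb{R}^N),$$ and $\lim_{t\to0}t^{-1}\mathcal K_s(y,t)=\frac{C_{N,s}}{|y|^{N+2s}}$ locally uniformly in $\mathbb{R}^N\setminus\{0\}$. *)

theory Defs
  imports "HOL-Analysis.Analysis"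
begin

text \<open>Euclidean space R^N is modelled as the product type (real^'m) \<times> real,
  with N = CARD('m) + 1; a point y is the pair (y', y_N).
  The product norm is Euclidean, and lborel on the product type is Lebesgue measure.\<close>

definition dimN :: "'m::finite itself \<Rightarrow> real" where
  "dimN _ = real CARD('m) + 1"

definition cyl :: "real \<Rightarrow> ((real^'m::finite) \<times> real) set" where
  "cyl r = ball 0 r \<times> {-r<..<r}"

definition C1_holder_on :: "real \<Rightarrow> 'a::euclidean_space set \<Rightarrow> ('a \<Rightarrow> real) \<Rightarrow> bool" where
  "C1_holder_on \<beta> S g \<longleftrightarrow>
     (\<exists>G. (\<forall>x\<in>S. (g has_derivative (\<lambda>h. G x \<bullet> h)) (at x within S))
        \<and> bounded (g ` S) \<and> bounded (G ` S)
        \<and> (\<exists>H. \<forall>x\<in>S. \<forall>y\<in>S. norm (G x - G y) \<le> H * norm (x - y) powr \<beta>))"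

definition C1beta_boundary :: "real \<Rightarrow> ((real^'m::finite) \<times> real) set \<Rightarrow> bool" where
  "C1beta_boundary \<beta> E \<longleftrightarrow>
     (\<forall>p\<in>frontier E. \<exists>(R::(real^'m) \<times> real \<Rightarrow> (real^'m) \<times> real) \<rho> (g::real^'m \<Rightarrow> real).
        orthogonal_transformation R \<and> \<rho> > 0
        \<and> C1_holder_on \<beta> (ball (0::real^'m) \<rho>) g
        \<and> E \<inter> (\<lambda>y. p + R y) ` (cyl \<rho> :: ((real^'m) \<times> real) set)
            = (\<lambda>y. p + R y) ` {y \<in> cyl \<rho>. snd y > g (fst y)})"

definition kern :: "(((real^'m::finite) \<times> real) \<Rightarrow> real) \<Rightarrow> real \<Rightarrow> ((real^'m) \<times> real) \<Rightarrow> real \<Rightarrow> real" where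
  "kern P s x t = t powr (- dimN TYPE('m) / (2 * s)) * P (t powr (- 1 / (2 * s)) *\<^sub>R x)"

definition tauE :: "'a::topological_space set \<Rightarrow> 'a \<Rightarrow> real" where
  "tauE E y = indicator E y - indicator (- closure E) y"

end

theory Submission
  imports Defs
begin

(* Since the kernel is radial and the cylinder Q_r is symmetric, the odd function
  K_s(y,t) sgn(y_N) integrates to zero over Q_r, so J_r(t) only sees tau_E - sgn(y_N).
  As E is the supergraph of gamma and |gamma(y')| <= C |y'|^(1+beta), this difference
  vanishes outside the slab |y_N| <= C |y'|^(1+beta).  With K_s(y,t) <= C t |y|^(-N-2s)
  the slab contributes at most C t times the integral of |y'|^(beta-2s-(N-1)) over
  |y'| < r, which is finite and O(r^(beta-2s)) because beta > 2s.  The limit of I_r(t)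
  follows by dominated convergence, the same kernel bound giving the integrable majorant
  C |y|^(-N-2s) outside the ball B_r. *)

lemma ex_power2_bracket:
  fixes y :: real
  assumes "1 \<le> y"
  shows "\<exists>k::nat. 2 ^ k \<le> y \<and> y < 2 ^ Suc k"
proof -
  define k where "k = \<lfloor>log 2 y\<rfloor>"
  have "0 \<le> k" using assms unfolding k_def by simp
  moreover have "2 powr k \<le> y \<and> y < 2 powr (k + 1)"
    using assms floor_log_eq_powr_iff[of y 2 k] unfolding k_def by simp
  ultimately have "2 ^ nat k \<le> y \<and> y < 2 ^ Suc (nat k)"
    by (simp add: powr_realpow[symmetric] powr_add)
  then show ?thesis by blast
qed

lemma nn_integral_indicator_le_suminf:
  fixes f :: "'a \<Rightarrow> ennreal"
  assumes [measurable]: "\<And>k. A k \<in> sets M"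
    and cover: "\<And>x. x \<in> S \<Longrightarrow> f x \<noteq> 0 \<Longrightarrow> \<exists>k. x \<in> A k \<and> f x \<le> c k"
  shows "(\<integral>\<^sup>+x. indicator S x * f x \<partial>M) \<le> (\<Sum>k. c k * emeasure M (A k))"
proof -
  have "indicator S x * f x \<le> (\<Sum>k. c k * indicator (A k) x)" for x
  proof (cases "x \<in> S \<and> f x \<noteq> 0")
    case True
    then obtain k where "x \<in> A k" "f x \<le> c k" using cover by blast
    then have "indicator S x * f x \<le> (\<Sum>i\<in>{k}. c i * indicator (A i) x)" using True by simp
    also have "\<dots> \<le> (\<Sum>k. c k * indicator (A k) x)"
      by (rule sum_le_suminf[OF summableI]) auto
    finally show ?thesis .
  qed auto
  then have "(\<integral>\<^sup>+x. indicator S x * f x \<partial>M) \<le> (\<integral>\<^sup>+x. (\<Sum>k. c k * indicator (A k) x) \<partial>M)"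
    by (intro nn_integral_mono)
  also have "\<dots> = (\<Sum>k. c k * emeasure M (A k))"
    by (simp add: nn_integral_suminf nn_integral_cmult_indicator)
  finally show ?thesis .
qed

lemma ennreal_suminf_geometric:
  fixes K q :: real
  assumes "0 \<le> K" "0 \<le> q" "q < 1"
  shows "(\<Sum>k. ennreal (K * q ^ k)) = ennreal (K / (1 - q))"
proof -
  have "(\<Sum>k. ennreal (K * q ^ k)) = ennreal (\<Sum>k. K * q ^ k)"
    using assms by (intro suminf_ennreal2) (auto intro!: summable_mult summable_geometric)
  also have "(\<Sum>k. K * q ^ k) = K / (1 - q)"
    using assms by (simp add: suminf_mult suminf_geometric summable_geometric)
  finally show ?thesis .
qed

(* Both integrals are cut along dyadic annuli, on each of which the integrand is bounded by
  its value on the inner sphere; the pieces then form a geometric series. *)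
lemma nn_integral_ball_norm_powr_le:
  fixes r \<delta> :: real
  assumes \<delta>: "0 < \<delta>" "\<delta> \<le> DIM('a)" and r: "0 < r"
  defines "K \<equiv> unit_ball_vol DIM('a) * 2 powr (DIM('a) - \<delta>) / (1 - 2 powr (- \<delta>))"
  shows "(\<integral>\<^sup>+x. indicator (ball (0::'a::euclidean_space) r) x * ennreal (norm x powr (\<delta> - DIM('a))) \<partial>lborel)
     \<le> ennreal (K * r powr \<delta>)"
proof -
  define d where "d = real DIM('a)"
  define \<rho> where "\<rho> k = r / 2 ^ k" for k :: nat
  define A where "A k = cball 0 (\<rho> k) - ball (0::'a) (\<rho> (Suc k))" for k
  define V where "V = unit_ball_vol DIM('a)"
  define q :: real where "q = 2 powr (- \<delta>)"
  have \<rho>: "0 < \<rho> k" for k unfolding \<rho>_def using r by simp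
  have q: "0 < q" "q < 1"
    unfolding q_def using \<delta> powr_less_cancel_iff[of 2 "- \<delta>" 0] by auto
  have "(\<integral>\<^sup>+x. indicator (ball (0::'a) r) x * ennreal (norm x powr (\<delta> - d)) \<partial>lborel)
      \<le> (\<Sum>k. ennreal (\<rho> (Suc k) powr (\<delta> - d)) * emeasure lborel (A k))"
  proof (rule nn_integral_indicator_le_suminf[where f="\<lambda>x. ennreal (norm x powr (\<delta> - d))"])
    fix x :: 'a assume x: "x \<in> ball 0 r" "ennreal (norm x powr (\<delta> - d)) \<noteq> 0"
    then have "0 < norm x" by (auto intro: ccontr)
    with x obtain k :: nat where "2 ^ k \<le> r / norm x" "r / norm x < 2 ^ Suc k"
      using ex_power2_bracket[of "r / norm x"] by auto
    then have "\<rho> (Suc k) < norm x" "norm x \<le> \<rho> k"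
      using \<open>0 < norm x\<close> unfolding \<rho>_def by (simp_all add: field_simps)
    moreover from this have "norm x powr (\<delta> - d) \<le> \<rho> (Suc k) powr (\<delta> - d)"
      using \<delta> \<rho> unfolding d_def by (intro powr_mono2') auto
    ultimately show
      "\<exists>k. x \<in> A k \<and> ennreal (norm x powr (\<delta> - d)) \<le> ennreal (\<rho> (Suc k) powr (\<delta> - d))"
      unfolding A_def by (auto intro!: ennreal_leI)
  qed (simp add: A_def)
  also have "\<dots> \<le> (\<Sum>k. ennreal (V * 2 powr (d - \<delta>) * r powr \<delta> * q ^ k))"
  proof (intro suminf_le allI)
    fix k
    have "emeasure lborel (A k) \<le> emeasure lborel (cball (0::'a) (\<rho> k))"
      unfolding A_def by (intro emeasure_mono) auto
    also have "\<dots> = ennreal (V * \<rho> k ^ DIM('a))"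
      unfolding V_def using less_imp_le[OF \<rho>] by (simp add: emeasure_cball)
    finally have "ennreal (\<rho> (Suc k) powr (\<delta> - d)) * emeasure lborel (A k)
        \<le> ennreal (\<rho> (Suc k) powr (\<delta> - d) * (V * \<rho> k ^ DIM('a)))"
      by (simp add: ennreal_mult' mult_left_mono)
    also have "\<rho> (Suc k) powr (\<delta> - d) * (V * \<rho> k ^ DIM('a)) = V * 2 powr (d - \<delta>) * r powr \<delta> * q ^ k"
      using r unfolding \<rho>_def q_def d_def
      by (simp add: powr_realpow[symmetric] powr_divide powr_mult powr_power powr_powr powr_diff
          powr_minus field_simps flip: powr_add)
    finally show "ennreal (\<rho> (Suc k) powr (\<delta> - d)) * emeasure lborel (A k)
        \<le> ennreal (V * 2 powr (d - \<delta>) * r powr \<delta> * q ^ k)" .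
  qed auto
  also have "\<dots> = ennreal (K * r powr \<delta>)"
    using q by (subst ennreal_suminf_geometric) (auto simp: K_def V_def q_def d_def)
  finally show ?thesis unfolding d_def .
qed

lemma set_integrable_norm_powr_outside_ball:
  fixes r a :: real
  assumes a: "DIM('a) < a" and r: "0 < r"
  shows "set_integrable lborel (- ball (0::'a::euclidean_space) r) (\<lambda>x. norm x powr (- a))"
proof -
  define d where "d = real DIM('a)"
  define \<rho> where "\<rho> k = r * 2 ^ k" for k :: nat
  define A where "A k = ball 0 (\<rho> (Suc k)) - ball (0::'a) (\<rho> k)" for k
  define V where "V = unit_ball_vol DIM('a)"
  define q :: real where "q = 2 powr (d - a)"
  have \<rho>: "0 < \<rho> k" for k unfolding \<rho>_def using r by simp
  have q: "0 < q" "q < 1"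
    unfolding q_def d_def using a powr_less_cancel_iff[of 2 "DIM('a) - a" 0] by auto
  have "(\<integral>\<^sup>+x. indicator (- ball (0::'a) r) x * ennreal (norm x powr (- a)) \<partial>lborel)
      \<le> (\<Sum>k. ennreal (\<rho> k powr (- a)) * emeasure lborel (A k))"
  proof (rule nn_integral_indicator_le_suminf[where f="\<lambda>x. ennreal (norm x powr (- a))"])
    fix x :: 'a assume x: "x \<in> - ball 0 r"
    then obtain k :: nat where "2 ^ k \<le> norm x / r" "norm x / r < 2 ^ Suc k"
      using ex_power2_bracket[of "norm x / r"] r by auto
    then have "\<rho> k \<le> norm x" "norm x < \<rho> (Suc k)"
      using r unfolding \<rho>_def by (simp_all add: field_simps)
    moreover from this have "norm x powr (- a) \<le> \<rho> k powr (- a)"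
      using a \<rho> by (intro powr_mono2') auto
    ultimately show "\<exists>k. x \<in> A k \<and> ennreal (norm x powr (- a)) \<le> ennreal (\<rho> k powr (- a))"
      unfolding A_def by (auto intro!: ennreal_leI)
  qed (simp add: A_def)
  also have "\<dots> \<le> (\<Sum>k. ennreal (V * 2 powr d * r powr (d - a) * q ^ k))"
  proof (intro suminf_le allI)
    fix k
    have "emeasure lborel (A k) \<le> emeasure lborel (ball (0::'a) (\<rho> (Suc k)))"
      unfolding A_def by (intro emeasure_mono) auto
    also have "\<dots> = ennreal (V * \<rho> (Suc k) ^ DIM('a))"
      unfolding V_def using less_imp_le[OF \<rho>] by (simp add: emeasure_ball)
    finally have "ennreal (\<rho> k powr (- a)) * emeasure lborel (A k)
        \<le> ennreal (\<rho> k powr (- a) * (V * \<rho> (Suc k) ^ DIM('a)))"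
      by (simp add: ennreal_mult' mult_left_mono)
    also have "\<rho> k powr (- a) * (V * \<rho> (Suc k) ^ DIM('a)) = V * 2 powr d * r powr (d - a) * q ^ k"
      using r unfolding \<rho>_def q_def d_def
      by (simp add: powr_realpow[symmetric] powr_mult powr_power powr_powr powr_diff powr_minus
          field_simps flip: powr_add)
    finally show "ennreal (\<rho> k powr (- a)) * emeasure lborel (A k)
        \<le> ennreal (V * 2 powr d * r powr (d - a) * q ^ k)" .
  qed auto
  also have "\<dots> < \<infinity>"
    using q by (subst ennreal_suminf_geometric) (auto simp: V_def)
  finally have finite:
    "(\<integral>\<^sup>+x. indicator (- ball (0::'a) r) x * ennreal (norm x powr (- a)) \<partial>lborel) < \<infinity>" .
  have "(\<integral>\<^sup>+x. ennreal (indicator (- ball (0::'a) r) x *\<^sub>R norm x powr (- a)) \<partial>lborel)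
      = (\<integral>\<^sup>+x. indicator (- ball (0::'a) r) x * ennreal (norm x powr (- a)) \<partial>lborel)"
    by (intro nn_integral_cong) (simp add: indicator_def)
  then show ?thesis
    unfolding set_integrable_def using finite by (intro integrableI_nonneg) auto
qed

lemma nn_integral_lborel_slab:
  fixes b :: "'a::euclidean_space \<Rightarrow> real" and f :: "'a \<Rightarrow> ennreal"
  assumes [measurable]: "b \<in> borel_measurable borel" "f \<in> borel_measurable borel"
  shows "(\<integral>\<^sup>+y. indicator {y :: 'a \<times> real. \<bar>snd y\<bar> \<le> b (fst y)} y * f (fst y) \<partial>lborel)
    = (\<integral>\<^sup>+x. ennreal (2 * b x) * f x \<partial>lborel)"
proof -
  have "(\<integral>\<^sup>+z. indicator {y :: 'a \<times> real. \<bar>snd y\<bar> \<le> b (fst y)} (x, z) * f x \<partial>lborel)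
      = ennreal (2 * b x) * f x" for x
  proof -
    have "(\<integral>\<^sup>+z. indicator {y :: 'a \<times> real. \<bar>snd y\<bar> \<le> b (fst y)} (x, z) * f x \<partial>lborel)
        = (\<integral>\<^sup>+z. f x * indicator {- b x..b x} z \<partial>lborel)"
      by (intro nn_integral_cong) (auto simp: indicator_def abs_le_iff)
    also have "\<dots> = f x * ennreal (2 * b x)"
      by (cases "0 \<le> b x") (simp_all add: nn_integral_cmult_indicator ennreal_neg)
    finally show ?thesis by (simp add: mult.commute)
  qed
  then show ?thesis
    by (simp add: lborel_prod[symmetric] lborel.nn_integral_fst[symmetric])
qed

lemma nn_integral_slab_norm_powr:
  fixes c C a \<beta> r :: real
  assumes "0 \<le> c" "0 \<le> C"
  shows "(\<integral>\<^sup>+y. indicator {y :: 'a::euclidean_space \<times> real. \<bar>snd y\<bar> \<le> c * norm (fst y) powr (1 + \<beta>)} y *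
      (indicator (ball 0 r) (fst y) * ennreal (C / norm (fst y) powr a)) \<partial>lborel)
    = ennreal (2 * c * C) *
      (\<integral>\<^sup>+x. indicator (ball (0::'a) r) x * ennreal (norm x powr (1 + \<beta> - a)) \<partial>lborel)"
proof -
  define b where "b x = c * norm x powr (1 + \<beta>)" for x :: 'a
  define f where "f x = indicator (ball 0 r) x * ennreal (C / norm x powr a)" for x :: 'a
  have [measurable]: "ball (0::'a) r \<in> sets borel" by simp
  have "(\<integral>\<^sup>+y. indicator {y :: 'a \<times> real. \<bar>snd y\<bar> \<le> b (fst y)} y * f (fst y) \<partial>lborel)
      = (\<integral>\<^sup>+x. ennreal (2 * b x) * f x \<partial>lborel)"
    by (rule nn_integral_lborel_slab[of b f]) (unfold b_def f_def; measurable)+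
  also have "\<dots> = (\<integral>\<^sup>+x. ennreal (2 * c * C) *
      (indicator (ball (0::'a) r) x * ennreal (norm x powr (1 + \<beta> - a))) \<partial>lborel)"
  proof (rule nn_integral_cong)
    fix x :: 'a
    have "2 * b x * (C / norm x powr a) = 2 * c * C * norm x powr (1 + \<beta> - a)"
      by (simp add: b_def powr_diff)
    then show "ennreal (2 * b x) * f x
        = ennreal (2 * c * C) * (indicator (ball 0 r) x * ennreal (norm x powr (1 + \<beta> - a)))"
      using assms by (auto simp: f_def b_def indicator_def ennreal_mult'' [symmetric])
  qed
  also have "\<dots> = ennreal (2 * c * C) *
      (\<integral>\<^sup>+x. indicator (ball (0::'a) r) x * ennreal (norm x powr (1 + \<beta> - a)) \<partial>lborel)"
    by (rule nn_integral_cmult) measurable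
  finally show ?thesis by (simp add: b_def f_def)
qed

lemma lborel_integral_odd_eq_0:
  fixes f :: "'a::euclidean_space \<Rightarrow> real"
  assumes [measurable]: "f \<in> borel_measurable borel" and odd: "\<And>x. f (- x) = - f x"
  shows "integral\<^sup>L lborel f = 0"
proof -
  have "distr lborel borel uminus = (lborel :: 'a measure)"
    by (subst lborel_affine[of "-1" 0]) (auto simp: density_1 one_ennreal_def[symmetric])
  then have "integral\<^sup>L lborel f = integral\<^sup>L (distr lborel borel uminus) f"
    by simp
  also have "\<dots> = - integral\<^sup>L lborel f"
    by (simp add: integral_distr odd)
  finally show ?thesis by simp
qed

lemma integral_dominated_convergence_at_right:
  fixes s :: "real \<Rightarrow> 'a \<Rightarrow> 'b::{banach, second_countable_topology}"
  assumes "f \<in> borel_measurable M" "\<And>t. s t \<in> borel_measurable M" "integrable M w"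
    and lim: "AE x in M. ((\<lambda>t. s t x) \<longlongrightarrow> f x) (at_right 0)"
    and bound: "\<And>t. 0 < t \<Longrightarrow> AE x in M. norm (s t x) \<le> w x"
  shows "((\<lambda>t. integral\<^sup>L M (s t)) \<longlongrightarrow> integral\<^sup>L M f) (at_right 0)"
  unfolding filterlim_at_right_to_top
proof (rule integral_dominated_convergence_at_top[where w=w])
  show "AE x in M. ((\<lambda>u. s (inverse u) x) \<longlongrightarrow> f x) at_top"
    using lim by eventually_elim (simp add: filterlim_at_right_to_top)
  show "\<forall>\<^sub>F u in at_top. AE x in M. norm (s (inverse u) x) \<le> w x"
    using eventually_gt_at_top[of 0] by eventually_elim (simp add: bound)
qed (use assms in auto)

lemma borel_measurable_tauE [measurable]:
  assumes "E \<in> sets borel"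
  shows "tauE E \<in> borel_measurable borel"
proof -
  have "- closure E \<in> sets borel" by (intro borel_open) auto
  then show ?thesis
    unfolding tauE_def using assms by (intro borel_measurable_diff borel_measurable_indicator)
qed

lemma abs_tauE_le_1: "\<bar>tauE E y\<bar> \<le> 1"
  by (simp add: tauE_def indicator_def)

lemma tauE_eq_sgn_off_graph:
  fixes \<gamma> :: "'a::topological_space \<Rightarrow> real"
  assumes "open U" and \<gamma>: "continuous_on (fst ` U) \<gamma>"
    and graph: "E \<inter> U = {y \<in> U. \<gamma> (fst y) < snd y}"
    and y: "y \<in> U" "\<bar>\<gamma> (fst y)\<bar> < \<bar>snd y\<bar>"
  shows "tauE E y = sgn (snd y)"
proof (cases "\<gamma> (fst y) < snd y")
  case True
  then have "y \<in> E" using graph y by blast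
  then show ?thesis using True y closure_subset[of E] by (auto simp: tauE_def)
next
  case False
  define L where "L = U \<inter> (\<lambda>z. \<gamma> (fst z) - snd z) -` {0<..}"
  have "continuous_on U (\<lambda>z. \<gamma> (fst z) - snd z)"
    by (intro continuous_intros continuous_on_compose2[OF \<gamma>]) auto
  then have "open L"
    unfolding L_def using \<open>open U\<close> by (intro continuous_open_preimage) auto
  moreover have "L \<inter> E = {}"
  proof -
    have "\<gamma> (fst z) < snd z" if "z \<in> E" "z \<in> U" for z using graph that by blast
    then show ?thesis unfolding L_def by force
  qed
  ultimately have "L \<inter> closure E = {}" by (simp add: open_Int_closure_eq_empty)
  moreover have "y \<in> L" using y False unfolding L_def by auto
  ultimately have "y \<notin> closure E" by blast
  moreover from this have "y \<notin> E" using closure_subset by blast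
  ultimately show ?thesis using False y by (auto simp: tauE_def)
qed

lemma open_cyl: "open (cyl r)"
  unfolding cyl_def by (intro open_Times) auto

lemma cyl_borel [measurable]: "cyl r \<in> sets borel"
  by (simp add: borel_open open_cyl)

lemma emeasure_cyl_finite: "emeasure lborel (cyl r) < \<infinity>"
  unfolding cyl_def by (intro emeasure_bounded_finite bounded_Times) auto

lemma uminus_mem_cyl_iff: "- y \<in> cyl r \<longleftrightarrow> y \<in> cyl r"
  by (cases y) (auto simp: cyl_def)

lemma fst_mem_ball_if_mem_cyl: "y \<in> cyl r \<Longrightarrow> fst y \<in> ball 0 r"
  by (cases y) (auto simp: cyl_def)

lemma ball_subset_cyl: "ball 0 r \<subseteq> cyl r"
proof
  fix y :: "(real^'m) \<times> real"
  assume "y \<in> ball 0 r"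
  moreover have "norm (fst y) \<le> norm y" "\<bar>snd y\<bar> \<le> norm y"
    using norm_fst_le[of "fst y" "snd y"] norm_snd_le[of "snd y" "fst y"] by auto
  ultimately show "y \<in> cyl r" by (cases y) (auto simp: cyl_def)
qed

lemma cyl_mono: "r \<le> r' \<Longrightarrow> cyl r \<subseteq> cyl r'"
  by (auto simp: cyl_def)

lemma tauE_eq_sgn_outside_slab:
  fixes \<gamma> :: "real^'m \<Rightarrow> real"
  assumes \<gamma>: "continuous_on (ball 0 r0) \<gamma>"
    and \<gamma>_bound: "\<And>y'. y' \<in> ball 0 r0 \<Longrightarrow> \<bar>\<gamma> y'\<bar> \<le> C\<gamma> * norm y' powr (1 + \<beta>)"
    and graph: "E \<inter> cyl r0 = {y \<in> cyl r0. \<gamma> (fst y) < snd y}"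
    and y: "y \<in> cyl r0" "\<bar>C\<gamma>\<bar> * norm (fst y) powr (1 + \<beta>) < \<bar>snd y\<bar>"
  shows "tauE E y = sgn (snd y)"
proof (rule tauE_eq_sgn_off_graph[OF open_cyl _ graph y(1)])
  show "continuous_on (fst ` cyl r0) \<gamma>"
    by (rule continuous_on_subset[OF \<gamma>]) (auto intro: fst_mem_ball_if_mem_cyl)
  show "\<bar>\<gamma> (fst y)\<bar> < \<bar>snd y\<bar>"
    using \<gamma>_bound[OF fst_mem_ball_if_mem_cyl[OF y(1)]] y(2)
      mult_right_mono[OF abs_ge_self powr_ge_zero, of C\<gamma> "norm (fst y)" "1 + \<beta>"]
    by linarith
qed

lemma borel_measurable_sgn_snd [measurable]:
  "(\<lambda>y :: 'a::second_countable_topology \<times> real. sgn (snd y)) \<in> borel_measurable borel"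
  unfolding borel_prod[symmetric] by measurable

locale kernel_profile =
  fixes P :: "(real^'m::finite) \<times> real \<Rightarrow> real" and s CC :: real
  assumes s_pos: "0 < s" and CC_pos: "0 < CC"
    and P_cont: "continuous_on UNIV P"
    and P_radial: "\<And>x y. norm x = norm y \<Longrightarrow> P x = P y"
    and P_nonneg: "\<And>y. 0 \<le> P y"
    and P_upper: "\<And>y. P y \<le> CC / (1 + norm y powr (dimN TYPE('m) + 2 * s))"
begin

lemma kern_nonneg: "0 \<le> kern P s y t"
  unfolding kern_def using P_nonneg by simp

lemma kern_even: "kern P s (- y) t = kern P s y t"
  unfolding kern_def using P_radial[of "t powr (- 1 / (2 * s)) *\<^sub>R - y"] by simp

lemma kern_le_uniform: "kern P s y t \<le> CC * t powr (- dimN TYPE('m) / (2 * s))"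
proof -
  have "CC / (1 + norm (t powr (- 1 / (2 * s)) *\<^sub>R y) powr (dimN TYPE('m) + 2 * s)) \<le> CC / 1"
    using CC_pos by (intro divide_left_mono) (auto intro!: add_pos_nonneg)
  then have "P (t powr (- 1 / (2 * s)) *\<^sub>R y) \<le> CC"
    using P_upper[of "t powr (- 1 / (2 * s)) *\<^sub>R y"] by simp
  then have "t powr (- dimN TYPE('m) / (2 * s)) * P (t powr (- 1 / (2 * s)) *\<^sub>R y)
      \<le> t powr (- dimN TYPE('m) / (2 * s)) * CC"
    by (intro mult_left_mono) auto
  then show ?thesis unfolding kern_def by (simp add: mult.commute)
qed

lemma kern_le_norm_powr:
  assumes t: "0 < t" and y: "y \<noteq> 0"
  shows "kern P s y t \<le> CC * t / norm y powr (dimN TYPE('m) + 2 * s)"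
proof -
  define a where "a = dimN TYPE('m) + 2 * s"
  define u where "u = t powr (- 1 / (2 * s))"
  have u: "0 < u" unfolding u_def using t by simp
  have "P (u *\<^sub>R y) \<le> CC / (1 + norm (u *\<^sub>R y) powr a)"
    using P_upper unfolding a_def by blast
  also have "\<dots> \<le> CC / (u powr a * norm y powr a)"
    using CC_pos u y by (intro divide_left_mono) (auto simp: powr_mult intro!: mult_pos_pos add_pos_nonneg)
  finally have P_le: "P (u *\<^sub>R y) \<le> CC / (u powr a * norm y powr a)" .
  define T where "T = t powr (- dimN TYPE('m) / (2 * s))"
  have "T = t * u powr a"
  proof -
    have "- 1 / (2 * s) * a = - dimN TYPE('m) / (2 * s) - 1"
      using s_pos unfolding a_def by (simp add: field_simps)
    then show ?thesis unfolding u_def T_def using t by (simp add: powr_powr powr_diff)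
  qed
  have "kern P s y t = T * P (u *\<^sub>R y)"
    unfolding kern_def u_def T_def ..
  also have "\<dots> \<le> T * (CC / (u powr a * norm y powr a))"
    using P_le unfolding T_def by (intro mult_left_mono) auto
  also have "\<dots> = CC * t / norm y powr a"
    unfolding \<open>T = t * u powr a\<close> using u by (simp add: field_simps)
  finally show ?thesis unfolding a_def .
qed

lemma borel_measurable_kern [measurable]: "(\<lambda>y. kern P s y t) \<in> borel_measurable borel"
proof -
  have [measurable]: "P \<in> borel_measurable borel"
    using P_cont by (rule borel_measurable_continuous_onI)
  show ?thesis unfolding kern_def by measurable
qed

lemma set_integrable_kern_mult:
  assumes [measurable]: "A \<in> sets borel" "\<tau> \<in> borel_measurable borel"
    and "emeasure lborel A < \<infinity>" and \<tau>_le: "\<And>y. \<bar>\<tau> y\<bar> \<le> 1"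
  shows "set_integrable lborel A (\<lambda>y. kern P s y t * \<tau> y)"
  unfolding set_integrable_def
proof (rule integrableI_bounded_set_indicator[where B="CC * t powr (- dimN TYPE('m) / (2 * s))"])
  show "AE y in lborel. y \<in> A \<longrightarrow> norm (kern P s y t * \<tau> y) \<le> CC * t powr (- dimN TYPE('m) / (2 * s))"
  proof (intro AE_I2 impI)
    fix y
    have "norm (kern P s y t * \<tau> y) \<le> kern P s y t"
      using kern_nonneg \<tau>_le[of y] by (simp add: abs_mult mult_left_le)
    then show "norm (kern P s y t * \<tau> y) \<le> CC * t powr (- dimN TYPE('m) / (2 * s))"
      using kern_le_uniform by (rule order_trans)
  qed
qed (use assms in auto)

lemma cyl_integral_kern_sgn_eq_0: "(LINT y:cyl r|lborel. kern P s y t * sgn (snd y)) = 0"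
  unfolding set_lebesgue_integral_def
proof (rule lborel_integral_odd_eq_0)
  show "(\<lambda>y. indicator (cyl r) y *\<^sub>R (kern P s y t * sgn (snd y))) \<in> borel_measurable borel"
    by measurable
qed (auto simp: kern_even uminus_mem_cyl_iff indicator_def sgn_minus)

lemma abs_cyl_integral_kern_le_defect:
  fixes \<tau> :: "(real^'m) \<times> real \<Rightarrow> real"
  assumes [measurable]: "\<tau> \<in> borel_measurable borel" and \<tau>_le: "\<And>y. \<bar>\<tau> y\<bar> \<le> 1"
  shows "ennreal \<bar>LINT y:cyl r|lborel. kern P s y t * \<tau> y\<bar>
    \<le> (\<integral>\<^sup>+y. indicator (cyl r) y * ennreal \<bar>kern P s y t * (\<tau> y - sgn (snd y))\<bar> \<partial>lborel)"
proof -
  define D where "D y = kern P s y t * (\<tau> y - sgn (snd y))" for y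
  have int_\<tau>: "set_integrable lborel (cyl r) (\<lambda>y. kern P s y t * \<tau> y)"
    by (rule set_integrable_kern_mult[OF _ _ emeasure_cyl_finite]) (simp_all add: \<tau>_le)
  have int_sgn: "set_integrable lborel (cyl r) (\<lambda>y. kern P s y t * sgn (snd y))"
    by (rule set_integrable_kern_mult[OF _ _ emeasure_cyl_finite]) (simp_all add: abs_sgn_eq)
  have "(LINT y:cyl r|lborel. kern P s y t * \<tau> y) = (LINT y:cyl r|lborel. D y)"
    using int_\<tau> int_sgn cyl_integral_kern_sgn_eq_0 unfolding D_def right_diff_distrib by simp
  moreover have "set_integrable lborel (cyl r) D"
    using int_\<tau> int_sgn unfolding D_def right_diff_distrib by simp
  then have "norm (LINT y:cyl r|lborel. D y) \<le> (\<integral>\<^sup>+y. norm (indicator (cyl r) y *\<^sub>R D y) \<partial>lborel)"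
    unfolding set_lebesgue_integral_def set_integrable_def by (rule integral_norm_bound_ennreal)
  moreover have "(\<integral>\<^sup>+y. norm (indicator (cyl r) y *\<^sub>R D y) \<partial>lborel)
      = (\<integral>\<^sup>+y. indicator (cyl r) y * ennreal \<bar>D y\<bar> \<partial>lborel)"
    by (intro nn_integral_cong) (simp add: indicator_def)
  ultimately show ?thesis unfolding D_def by simp
qed

lemma kern_sgn_defect_le:
  assumes t: "0 < t" and "y \<noteq> 0" and \<tau>_le: "\<bar>\<tau> y\<bar> \<le> 1"
    and \<tau>_sgn: "y \<in> cyl r \<Longrightarrow> c * norm (fst y) powr (1 + \<beta>) < \<bar>snd y\<bar> \<Longrightarrow> \<tau> y = sgn (snd y)"
  shows "indicator (cyl r) y * ennreal \<bar>kern P s y t * (\<tau> y - sgn (snd y))\<bar>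
    \<le> indicator {y. \<bar>snd y\<bar> \<le> c * norm (fst y) powr (1 + \<beta>)} y *
       (indicator (ball 0 r) (fst y) * ennreal (2 * CC * t / norm (fst y) powr (dimN TYPE('m) + 2 * s)))"
proof (cases "y \<in> cyl r \<and> \<bar>snd y\<bar> \<le> c * norm (fst y) powr (1 + \<beta>)")
  case True
  define a where "a = dimN TYPE('m) + 2 * s"
  have "fst y \<noteq> 0"
  proof
    assume "fst y = 0"
    then have "snd y = 0" using True by simp
    with \<open>fst y = 0\<close> \<open>y \<noteq> 0\<close> show False by (simp add: prod_eq_iff)
  qed
  have "\<bar>sgn (snd y)\<bar> \<le> (1::real)" by (simp add: abs_sgn_eq)
  then have "\<bar>\<tau> y - sgn (snd y)\<bar> \<le> 2"
    using \<tau>_le abs_triangle_ineq4[of "\<tau> y" "sgn (snd y)"] by linarith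
  have "\<bar>kern P s y t * (\<tau> y - sgn (snd y))\<bar> = \<bar>\<tau> y - sgn (snd y)\<bar> * kern P s y t"
    using kern_nonneg by (simp only: abs_mult abs_of_nonneg mult.commute)
  also have "\<dots> \<le> 2 * kern P s y t"
    using \<open>\<bar>\<tau> y - sgn (snd y)\<bar> \<le> 2\<close> kern_nonneg by (rule mult_right_mono)
  also have "\<dots> \<le> 2 * (CC * t / norm y powr a)"
    using kern_le_norm_powr[OF t \<open>y \<noteq> 0\<close>] unfolding a_def by (rule mult_left_mono) simp
  also have "\<dots> \<le> 2 * (CC * t / norm (fst y) powr a)"
  proof (intro mult_left_mono divide_left_mono)
    show "norm (fst y) powr a \<le> norm y powr a"
      using norm_fst_le[of "fst y" "snd y"] s_pos by (intro powr_mono2) (auto simp: a_def dimN_def)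
    show "0 < norm y powr a * norm (fst y) powr a"
      using \<open>fst y \<noteq> 0\<close> \<open>y \<noteq> 0\<close> by simp
  qed (use CC_pos t in auto)
  finally show ?thesis
    using True fst_mem_ball_if_mem_cyl[of y r] unfolding a_def by (simp add: ennreal_leI)
next
  case False
  then have "y \<notin> cyl r \<or> \<tau> y = sgn (snd y)" using \<tau>_sgn by fastforce
  then show ?thesis by auto
qed

lemma abs_cyl_integral_kern_le:
  fixes \<tau> :: "(real^'m) \<times> real \<Rightarrow> real"
  assumes t: "0 < t" and c: "0 \<le> c"
    and [measurable]: "\<tau> \<in> borel_measurable borel" and \<tau>_le: "\<And>y. \<bar>\<tau> y\<bar> \<le> 1"
    and \<tau>_sgn: "\<And>y. y \<in> cyl r \<Longrightarrow> c * norm (fst y) powr (1 + \<beta>) < \<bar>snd y\<bar> \<Longrightarrow> \<tau> y = sgn (snd y)"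
  shows "ennreal \<bar>LINT y:cyl r|lborel. kern P s y t * \<tau> y\<bar>
    \<le> ennreal (4 * c * CC * t) *
       (\<integral>\<^sup>+x. indicator (ball (0::real^'m) r) x * ennreal (norm x powr (\<beta> - 2 * s - CARD('m))) \<partial>lborel)"
proof -
  have "ennreal \<bar>LINT y:cyl r|lborel. kern P s y t * \<tau> y\<bar>
      \<le> (\<integral>\<^sup>+y. indicator (cyl r) y * ennreal \<bar>kern P s y t * (\<tau> y - sgn (snd y))\<bar> \<partial>lborel)"
    by (rule abs_cyl_integral_kern_le_defect) (simp_all add: \<tau>_le)
  also have "\<dots> \<le> (\<integral>\<^sup>+y. indicator {y :: (real^'m) \<times> real. \<bar>snd y\<bar> \<le> c * norm (fst y) powr (1 + \<beta>)} y *
      (indicator (ball 0 r) (fst y) * ennreal (2 * CC * t / norm (fst y) powr (dimN TYPE('m) + 2 * s)))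
      \<partial>lborel)"
    by (rule nn_integral_mono_AE, rule eventually_mono[OF AE_lborel_singleton[of 0]],
        rule kern_sgn_defect_le[OF t _ \<tau>_le \<tau>_sgn])
  also have "\<dots> = ennreal (2 * c * (2 * CC * t)) *
      (\<integral>\<^sup>+x. indicator (ball (0::real^'m) r) x *
        ennreal (norm x powr (1 + \<beta> - (dimN TYPE('m) + 2 * s))) \<partial>lborel)"
    using c CC_pos t by (intro nn_integral_slab_norm_powr) simp_all
  also have "1 + \<beta> - (dimN TYPE('m) + 2 * s) = \<beta> - 2 * s - CARD('m)"
    by (simp add: dimN_def)
  finally show ?thesis by (simp add: mult.assoc)
qed

lemma cyl_integral_kern_bound:
  fixes \<tau> :: "(real^'m) \<times> real \<Rightarrow> real"
  assumes \<beta>: "2 * s < \<beta>" "\<beta> - 2 * s \<le> CARD('m)" and c: "0 \<le> c"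
    and [measurable]: "\<tau> \<in> borel_measurable borel" and \<tau>_le: "\<And>y. \<bar>\<tau> y\<bar> \<le> 1"
    and \<tau>_sgn: "\<And>y. y \<in> cyl r0 \<Longrightarrow> c * norm (fst y) powr (1 + \<beta>) < \<bar>snd y\<bar> \<Longrightarrow> \<tau> y = sgn (snd y)"
  shows "\<exists>C>0. \<forall>t>0. \<forall>r. 0 < r \<and> r \<le> r0 \<longrightarrow>
    \<bar>LINT y:cyl r|lborel. kern P s y t * \<tau> y\<bar> \<le> C * t * r powr (\<beta> - 2 * s)"
proof -
  define \<delta> where "\<delta> = \<beta> - 2 * s"
  define K where "K = unit_ball_vol CARD('m) * 2 powr (CARD('m) - \<delta>) / (1 - 2 powr (- \<delta>))"
  have "K \<ge> 0"
    unfolding K_def using \<beta> powr_less_cancel_iff[of 2 "- \<delta>" 0]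
    by (auto simp: \<delta>_def unit_ball_vol_def intro!: divide_nonneg_pos)
  define C where "C = 4 * c * CC * K + 1"
  have "0 < C"
    unfolding C_def using c CC_pos \<open>K \<ge> 0\<close> by (intro add_nonneg_pos mult_nonneg_nonneg) auto
  have "\<bar>LINT y:cyl r|lborel. kern P s y t * \<tau> y\<bar> \<le> C * t * r powr \<delta>"
    if t: "0 < t" and r: "0 < r" "r \<le> r0" for t r
  proof -
    have "ennreal \<bar>LINT y:cyl r|lborel. kern P s y t * \<tau> y\<bar>
        \<le> ennreal (4 * c * CC * t) *
          (\<integral>\<^sup>+x. indicator (ball (0::real^'m) r) x * ennreal (norm x powr (\<beta> - 2 * s - CARD('m))) \<partial>lborel)"
      using \<tau>_sgn cyl_mono[OF r(2)] by (intro abs_cyl_integral_kern_le[OF t c _ \<tau>_le]) auto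
    also have "\<dots> \<le> ennreal (4 * c * CC * t) * ennreal (K * r powr \<delta>)"
      using nn_integral_ball_norm_powr_le[of \<delta> r, where 'a="real^'m"] \<beta> r
      by (intro mult_left_mono) (simp_all add: \<delta>_def K_def)
    also have "\<dots> = ennreal (4 * c * CC * K * t * r powr \<delta>)"
      using c CC_pos t \<open>K \<ge> 0\<close> by (simp add: ennreal_mult'' [symmetric] ac_simps)
    also have "\<dots> \<le> ennreal (C * t * r powr \<delta>)"
      using t by (intro ennreal_leI mult_right_mono) (auto simp: C_def)
    finally show ?thesis using \<open>0 < C\<close> t by (simp add: ennreal_le_iff)
  qed
  then show ?thesis using \<open>0 < C\<close> unfolding \<delta>_def by blast
qed

lemma tail_integral_kern_tendsto_0:
  fixes \<tau> :: "(real^'m) \<times> real \<Rightarrow> real"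
  assumes r: "0 < r" and [measurable]: "A \<in> sets borel" and A: "A \<inter> ball 0 r = {}"
    and [measurable]: "\<tau> \<in> borel_measurable borel" and \<tau>_le: "\<And>y. \<bar>\<tau> y\<bar> \<le> 1"
    and lim: "\<And>y. y \<noteq> 0 \<Longrightarrow>
      ((\<lambda>t. kern P s y t / t) \<longlongrightarrow> L / norm y powr (dimN TYPE('m) + 2 * s)) (at_right 0)"
  shows "((\<lambda>t. LINT y:A|lborel. (kern P s y t / t - L / norm y powr (dimN TYPE('m) + 2 * s)) * \<tau> y)
    \<longlongrightarrow> 0) (at_right 0)"
proof -
  define a where "a = dimN TYPE('m) + 2 * s"
  define F where "F = (\<lambda>t y. indicator A y *\<^sub>R ((kern P s y t / t - L / norm y powr a) * \<tau> y))"
  define w where "w y = (CC + \<bar>L\<bar>) * (indicator (- ball 0 r) y *\<^sub>R norm y powr (- a))"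
    for y :: "(real^'m) \<times> real"
  have w_int: "integrable lborel w"
    using set_integrable_norm_powr_outside_ball[of a r, where 'a="(real^'m) \<times> real"] r s_pos
    unfolding w_def set_integrable_def by (simp add: a_def dimN_def)
  have F_bound: "norm (F t y) \<le> w y" if "0 < t" for t y
  proof (cases "y \<in> A")
    case True
    then have y: "y \<notin> ball 0 r" using A by blast
    then have "0 < norm y" using r by auto
    have "kern P s y t / t \<le> CC / norm y powr a"
      using kern_le_norm_powr[OF \<open>0 < t\<close>, of y] \<open>0 < norm y\<close> \<open>0 < t\<close>
      by (simp add: a_def field_simps)
    moreover have "0 \<le> kern P s y t / t" using kern_nonneg \<open>0 < t\<close> by simp
    moreover have "\<bar>L / norm y powr a\<bar> = \<bar>L\<bar> / norm y powr a" by simp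
    ultimately have "\<bar>kern P s y t / t - L / norm y powr a\<bar> \<le> (CC + \<bar>L\<bar>) * norm y powr (- a)"
      using abs_triangle_ineq4[of "kern P s y t / t" "L / norm y powr a"]
      by (simp add: powr_minus divide_inverse distrib_right)
    moreover have "0 \<le> (CC + \<bar>L\<bar>) * norm y powr (- a)" using CC_pos by simp
    ultimately have "\<bar>kern P s y t / t - L / norm y powr a\<bar> * \<bar>\<tau> y\<bar> \<le> (CC + \<bar>L\<bar>) * norm y powr (- a)"
      using \<tau>_le[of y] by (metis abs_ge_zero mult_right_le_one_le order_trans)
    then show ?thesis using True y by (simp add: F_def w_def abs_mult)
  qed (use CC_pos in \<open>simp add: F_def w_def\<close>)
  have F_lim: "((\<lambda>t. F t y) \<longlongrightarrow> 0) (at_right 0)" for y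
  proof (cases "y \<in> A")
    case True
    then have "y \<noteq> 0" using A r by auto
    then have "((\<lambda>t. (kern P s y t / t - L / norm y powr a) * \<tau> y)
        \<longlongrightarrow> (L / norm y powr a - L / norm y powr a) * \<tau> y) (at_right 0)"
      using lim unfolding a_def by (intro tendsto_mult_right tendsto_diff tendsto_const)
    then show ?thesis using True by (simp add: F_def)
  qed (simp add: F_def)
  have "((\<lambda>t. integral\<^sup>L lborel (F t)) \<longlongrightarrow> integral\<^sup>L lborel (\<lambda>_ :: (real^'m) \<times> real. 0 :: real))
      (at_right 0)"
    by (rule integral_dominated_convergence_at_right[where w=w])
      (use w_int F_bound F_lim in \<open>auto simp: F_def\<close>)
  then show ?thesis by (simp add: F_def a_def set_lebesgue_integral_def)
qed

end

theorem lemma2p2: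
  fixes P :: "(real^'m::finite) \<times> real \<Rightarrow> real"
    and gradP :: "(real^'m) \<times> real \<Rightarrow> (real^'m) \<times> real"
    and s \<beta> CC CNs r0 C\<gamma> :: real
    and E :: "((real^'m) \<times> real) set"
    and \<gamma> :: "real^'m \<Rightarrow> real"
  assumes s: "0 < s" "s < 1"
    and \<beta>: "2 * s < \<beta>" "\<beta> \<le> 1"
    and P_deriv: "\<And>y. (P has_derivative (\<lambda>h. gradP y \<bullet> h)) (at y)"
    and gradP_cont: "continuous_on UNIV gradP"
    and P_radial: "\<And>x y. norm x = norm y \<Longrightarrow> P x = P y"
    and CC_pos: "CC > 0" and CNs_pos: "CNs > 0"
    and P_lower: "\<And>y. inverse CC / (1 + norm y powr (dimN TYPE('m) + 2 * s)) \<le> P y"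
    and P_upper: "\<And>y. P y \<le> CC / (1 + norm y powr (dimN TYPE('m) + 2 * s))"
    and gradP_bound: "\<And>y. norm (gradP y) \<le> CC / (1 + norm y powr (dimN TYPE('m) + 2 * s + 1))"
    and kern_lim: "\<And>S. compact S \<Longrightarrow> 0 \<notin> S \<Longrightarrow>
        uniform_limit S (\<lambda>t y. kern P s y t / t)
          (\<lambda>y. CNs / norm y powr (dimN TYPE('m) + 2 * s)) (at_right 0)"
    and E_open: "open E"
    and E_bdry: "C1beta_boundary \<beta> E"
    and zero_bdry: "0 \<in> frontier E"
    and r0: "r0 > 0"
    and \<gamma>_reg: "C1_holder_on \<beta> (ball 0 r0) \<gamma>"
    and \<gamma>_bound: "\<And>y'. y' \<in> ball 0 r0 \<Longrightarrow> \<bar>\<gamma> y'\<bar> \<le> C\<gamma> * norm y' powr (1 + \<beta>)"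
    and E_graph: "\<And>r. 0 < r \<Longrightarrow> r \<le> r0 \<Longrightarrow>
        E \<inter> cyl r = {y \<in> cyl r. snd y > \<gamma> (fst y)}"
  shows "(\<exists>C>0. \<forall>t>0. \<forall>r. 0 < r \<and> r \<le> r0 \<longrightarrow>
            \<bar>LINT y:cyl r|lborel. kern P s y t * tauE E y\<bar> \<le> C * t * r powr (\<beta> - 2 * s))
       \<and> (\<forall>r. 0 < r \<and> r \<le> r0 \<longrightarrow>
            ((\<lambda>t. LINT y:(- cyl r)|lborel.
                 (kern P s y t / t - CNs / norm y powr (dimN TYPE('m) + 2 * s)) * tauE E y)
              \<longlongrightarrow> 0) (at_right 0))"
proof -
  (* Only continuity, radial symmetry, the upper bound and (via P_lower) the nonnegativity
    of P are needed, and of the regularity of \<gamma> only its continuity. *)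
  interpret kernel_profile P s CC
  proof
    show "continuous_on UNIV P"
      using P_deriv by (meson continuous_at_imp_continuous_on has_derivative_continuous)
    show "0 \<le> P y" for y
      using CC_pos by (intro order_trans[OF _ P_lower]) simp
  qed (fact s(1) CC_pos P_radial P_upper)+
  have "continuous_on (ball 0 r0) \<gamma>"
    using \<gamma>_reg unfolding C1_holder_on_def by (meson has_derivative_continuous_on)
  note \<tau>_sgn = tauE_eq_sgn_outside_slab[OF this \<gamma>_bound E_graph[OF r0 order_refl]]
  have lim: "((\<lambda>t. kern P s y t / t) \<longlongrightarrow> CNs / norm y powr (dimN TYPE('m) + 2 * s)) (at_right 0)"
    if "y \<noteq> 0" for y
    using kern_lim[of "{y}"] that by (auto dest: tendsto_uniform_limitI)
  have \<tau>_meas: "tauE E \<in> borel_measurable borel"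
    using E_open by (intro borel_measurable_tauE borel_open)
  have "0 < CARD('m)" by simp
  then have "\<beta> - 2 * s \<le> CARD('m)" using \<beta>(2) s(1) by linarith
  have tail: "((\<lambda>t. LINT y:(- cyl r)|lborel.
      (kern P s y t / t - CNs / norm y powr (dimN TYPE('m) + 2 * s)) * tauE E y) \<longlongrightarrow> 0) (at_right 0)"
    if "0 < r" for r
  proof (rule tail_integral_kern_tendsto_0[OF \<open>0 < r\<close> _ _ _ abs_tauE_le_1 lim])
    show "- cyl r \<in> sets borel" by (rule borel_comp) (rule cyl_borel)
    show "- cyl r \<inter> ball 0 r = {}" using ball_subset_cyl by blast
  qed (fact \<tau>_meas)
  show ?thesis
    using cyl_integral_kern_bound[OF \<beta>(1) \<open>\<beta> - 2 * s \<le> CARD('m)\<close> abs_ge_zero \<tau>_meas abs_tauE_le_1 \<tau>_sgn] tail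
    by simp
qed

end
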